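(* Assume $|k|>r$, the characteristic of $k$ does not divide $r$, and $k$ contains a primitive $r$-th root of unity. Let $e,e'\in k\Sigma_r$ be Lie idempotents. Then $(k\mathrm{GL}_n(k),L^{n,r},ek\Sigma_re)$ satisfies Schur-Weyl duality if and only if $(k\mathrm{GL}_n(k),L^{n,r},e'k\Sigma_re')$ does.
   Context: $T^{n,r}=(k^n)^{\otimes r}$ with $\mathrm{GL}_n(k)$ acting on the left diagonally and $\Sigma_r$ on the right by place permutation $(v_1\otimes\cdots\otimes v_r)\cdot\sigma=v_{\sigma(1)}\otimes\cdots\otimes v_{\sigma(r)}$. $L^{n,r}=L(k^n)\cap T^{n,r}$, where $L(k^n)$ is the Lie subalgebra of the tensor algebra of $k^n$ generated by $k^n$ under $[a,b]=ab-ba$. A Lie idempotent is an idempotent $e\in k\Sigma_r$ with $L^{n,r}=T^{n,r}e$. A triple $(A,V,B)$ with $V$ an $(A,B)$-bimodule satisfies Schur-Weyl duality if the image of $A$ in $\operatorname{End}_k(V)$ equals $\operatorname{End}_B(V)$ and the image of $B$ equals $\operatorname{End}_A(V)$. *)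

theory Defs
  imports "HOL-Combinatorics.Permutations"
begin

text \<open>Tensors: an element of the tensor algebra of k^n is represented by its coefficient
function on words (lists of letters in {0..<n}); the word [i1,...,ir] stands for the
basis tensor e_i1 (x) ... (x) e_ir.\<close>

type_synonym 'k tensor = "nat list \<Rightarrow> 'k"

definition words :: "nat \<Rightarrow> nat \<Rightarrow> nat list set" where
  "words n r = {w. length w = r \<and> set w \<subseteq> {..<n}}"

definition Tnr :: "nat \<Rightarrow> nat \<Rightarrow> 'k::field tensor set" where
  "Tnr n r = {f. \<forall>w. f w \<noteq> 0 \<longrightarrow> w \<in> words n r}"

definition tadd :: "'k::field tensor \<Rightarrow> 'k tensor \<Rightarrow> 'k tensor" where
  "tadd f g = (\<lambda>w. f w + g w)"

definition tsmul :: "'k::field \<Rightarrow> 'k tensor \<Rightarrow> 'k tensor" where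
  "tsmul c f = (\<lambda>w. c * f w)"

definition tmul :: "'k::field tensor \<Rightarrow> 'k tensor \<Rightarrow> 'k tensor" where
  "tmul f g = (\<lambda>w. \<Sum>i\<le>length w. f (take i w) * g (drop i w))"

definition tbracket :: "'k::field tensor \<Rightarrow> 'k tensor \<Rightarrow> 'k tensor" where
  "tbracket f g = (\<lambda>w. tmul f g w - tmul g f w)"

inductive_set LieGen :: "nat \<Rightarrow> 'k::field tensor set" for n :: nat where
  gen: "(\<forall>w. f w \<noteq> 0 \<longrightarrow> w \<in> words n 1) \<Longrightarrow> f \<in> LieGen n"
| add: "f \<in> LieGen n \<Longrightarrow> g \<in> LieGen n \<Longrightarrow> tadd f g \<in> LieGen n"
| smul: "f \<in> LieGen n \<Longrightarrow> tsmul c f \<in> LieGen n"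
| brk: "f \<in> LieGen n \<Longrightarrow> g \<in> LieGen n \<Longrightarrow> tbracket f g \<in> LieGen n"

definition Lnr :: "nat \<Rightarrow> nat \<Rightarrow> 'k::field tensor set" where
  "Lnr n r = LieGen n \<inter> Tnr n r"

text \<open>Group algebra k Sigma_r: functions on permutations of {0..<r}; basis product
sigma * tau = sigma o tau.\<close>
definition perms :: "nat \<Rightarrow> (nat \<Rightarrow> nat) set" where
  "perms r = {\<sigma>. \<sigma> permutes {..<r}}"

definition grp_alg :: "nat \<Rightarrow> ((nat \<Rightarrow> nat) \<Rightarrow> 'k::field) set" where
  "grp_alg r = {a. \<forall>\<sigma>. a \<sigma> \<noteq> 0 \<longrightarrow> \<sigma> \<in> perms r}"

definition gprod :: "nat \<Rightarrow> ((nat \<Rightarrow> nat) \<Rightarrow> 'k::field) \<Rightarrow> ((nat \<Rightarrow> nat) \<Rightarrow> 'k) \<Rightarrow> ((nat \<Rightarrow> nat) \<Rightarrow> 'k)" where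
  "gprod r a b = (\<lambda>\<pi>. \<Sum>\<sigma>\<in>perms r. a \<sigma> * b (inv \<sigma> \<circ> \<pi>))"

definition permword :: "(nat \<Rightarrow> nat) \<Rightarrow> nat list \<Rightarrow> nat list" where
  "permword \<sigma> w = map (\<lambda>j. w ! \<sigma> j) [0..<length w]"

text \<open>Right action of k Sigma_r on tensors: e_w . sigma = e_{w . sigma}, so the coefficient
of u in f . sigma is f (u . sigma^{-1}).\<close>
definition tact :: "nat \<Rightarrow> 'k::field tensor \<Rightarrow> ((nat \<Rightarrow> nat) \<Rightarrow> 'k) \<Rightarrow> 'k tensor" where
  "tact r f a = (\<lambda>u. \<Sum>\<sigma>\<in>perms r. a \<sigma> * f (permword (inv \<sigma>) u))"

definition GL :: "nat \<Rightarrow> (nat \<Rightarrow> nat \<Rightarrow> 'k::field) set" where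
  "GL n = {g. (\<forall>i j. (n \<le> i \<or> n \<le> j) \<longrightarrow> g i j = 0) \<and>
     (\<exists>h. (\<forall>i j. (n \<le> i \<or> n \<le> j) \<longrightarrow> h i j = 0) \<and>
          (\<forall>i<n. \<forall>j<n. (\<Sum>l<n. g i l * h l j) = (if i = j then 1 else 0) \<and>
                       (\<Sum>l<n. h i l * g l j) = (if i = j then 1 else 0)))}"

text \<open>Diagonal left action: g e_j = sum_i g i j e_i, extended to tensor products.\<close>
definition gl_act :: "nat \<Rightarrow> (nat \<Rightarrow> nat \<Rightarrow> 'k::field) \<Rightarrow> 'k tensor \<Rightarrow> 'k tensor" where
  "gl_act n g f = (\<lambda>u. \<Sum>w\<in>words n (length u). (\<Prod>j<length u. g (u ! j) (w ! j)) * f w)"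

text \<open>Linear endomorphisms of a subspace V are represented by maps that vanish off V.\<close>
definition rest :: "'k::field tensor set \<Rightarrow> ('k tensor \<Rightarrow> 'k tensor) \<Rightarrow> ('k tensor \<Rightarrow> 'k tensor)" where
  "rest V \<phi> = (\<lambda>x. if x \<in> V then \<phi> x else (\<lambda>_. 0))"

definition lin_on :: "'k::field tensor set \<Rightarrow> ('k tensor \<Rightarrow> 'k tensor) \<Rightarrow> bool" where
  "lin_on V \<phi> \<longleftrightarrow> (\<forall>x\<in>V. \<forall>y\<in>V. \<phi> (tadd x y) = tadd (\<phi> x) (\<phi> y)) \<and>
                   (\<forall>c. \<forall>x\<in>V. \<phi> (tsmul c x) = tsmul c (\<phi> x))"

definition endo_comm :: "'k::field tensor set \<Rightarrow> ('k tensor \<Rightarrow> 'k tensor) set \<Rightarrow> ('k tensor \<Rightarrow> 'k tensor) set" where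
  "endo_comm V S = {\<phi>. \<phi> = rest V \<phi> \<and> \<phi> ` V \<subseteq> V \<and> lin_on V \<phi> \<and>
                       (\<forall>s\<in>S. \<forall>x\<in>V. \<phi> (s x) = s (\<phi> x))}"

definition imgGL :: "nat \<Rightarrow> 'k::field tensor set \<Rightarrow> ('k tensor \<Rightarrow> 'k tensor) set" where
  "imgGL n V = {rest V (\<lambda>x u. \<Sum>g\<in>F. c g * gl_act n g x u) | F c. finite F \<and> F \<subseteq> GL n}"

definition imgSym :: "nat \<Rightarrow> 'k::field tensor set \<Rightarrow> ((nat \<Rightarrow> nat) \<Rightarrow> 'k) set \<Rightarrow> ('k tensor \<Rightarrow> 'k tensor) set" where
  "imgSym r V B = {rest V (\<lambda>x. tact r x b) | b. b \<in> B}"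

definition schur_weyl :: "'k::field tensor set \<Rightarrow> ('k tensor \<Rightarrow> 'k tensor) set \<Rightarrow> ('k tensor \<Rightarrow> 'k tensor) set \<Rightarrow> bool" where
  "schur_weyl V IA IB \<longleftrightarrow> IA = endo_comm V IB \<and> IB = endo_comm V IA"

definition lie_idempotent :: "nat \<Rightarrow> nat \<Rightarrow> ((nat \<Rightarrow> nat) \<Rightarrow> 'k::field) \<Rightarrow> bool" where
  "lie_idempotent n r e \<longleftrightarrow> e \<in> grp_alg r \<and> gprod r e e = e \<and>
     Lnr n r = {tact r f e | f. f \<in> Tnr n r}"

definition corner :: "nat \<Rightarrow> ((nat \<Rightarrow> nat) \<Rightarrow> 'k::field) \<Rightarrow> ((nat \<Rightarrow> nat) \<Rightarrow> 'k) set" where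
  "corner r e = {gprod r (gprod r e a) e | a. a \<in> grp_alg r}"

definition SW_Lie :: "nat \<Rightarrow> nat \<Rightarrow> ((nat \<Rightarrow> nat) \<Rightarrow> 'k::field) \<Rightarrow> bool" where
  "SW_Lie n r e \<longleftrightarrow> schur_weyl (Lnr n r) (imgGL n (Lnr n r)) (imgSym r (Lnr n r) (corner r e))"

end

theory Submission
  imports Defs
begin

text \<open>A Lie idempotent \<open>e\<close> acts as the identity on \<open>L\<^sup>n\<^sup>,\<^sup>r\<close> and as a projection of
\<open>T\<^sup>n\<^sup>,\<^sup>r\<close> onto it, so on \<open>L\<^sup>n\<^sup>,\<^sup>r\<close> the corner element \<open>eae\<close> acts as \<open>x \<mapsto> (xa)e\<close>.
For a second Lie idempotent \<open>e'\<close> the element \<open>e'(ae)e'\<close> then acts by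
\<open>x \<mapsto> ((xa)e)e' = (xa)e\<close>, since \<open>(xa)e \<in> L\<^sup>n\<^sup>,\<^sup>r\<close>. Hence \<open>e k\<Sigma>\<^sub>r e\<close> and \<open>e' k\<Sigma>\<^sub>r e'\<close> have the
same image in \<open>End\<^sub>k(L\<^sup>n\<^sup>,\<^sup>r)\<close>, and Schur-Weyl duality only depends on that image.\<close>

lemma permword_eq_permute_list: "permword = permute_list"
  by (simp add: fun_eq_iff permword_def permute_list_def)

lemma length_permword [simp]: "length (permword \<sigma> w) = length w"
  by (simp add: permword_def)

lemma perms_inv: "\<sigma> \<in> perms r \<Longrightarrow> inv \<sigma> \<in> perms r"
  by (simp add: perms_def permutes_inv)

lemma perms_compose: "\<sigma> \<in> perms r \<Longrightarrow> \<tau> \<in> perms r \<Longrightarrow> \<sigma> \<circ> \<tau> \<in> perms r"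
  by (simp add: perms_def permutes_compose)

lemma sum_perms_compose_left:
  "\<sigma> \<in> perms r \<Longrightarrow> (\<Sum>\<pi>\<in>perms r. g \<pi>) = (\<Sum>\<tau>\<in>perms r. g (\<sigma> \<circ> \<tau>))"
  unfolding perms_def mem_Collect_eq by (rule setum_permutations_compose_left)

lemma permword_in_words_iff:
  assumes "\<sigma> \<in> perms r"
  shows "permword \<sigma> u \<in> words n r \<longleftrightarrow> u \<in> words n r"
proof (cases "length u = r")
  case True
  then have "\<sigma> permutes {..<length u}"
    using assms by (simp add: perms_def)
  then show ?thesis
    by (simp add: words_def permword_eq_permute_list)
qed (simp add: words_def permword_eq_permute_list)

lemma tact_in_Tnr:
  assumes "f \<in> Tnr n r"
  shows "tact r f a \<in> Tnr n r"
  unfolding Tnr_def mem_Collect_eq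
proof (intro allI impI)
  fix u
  assume "tact r f a u \<noteq> 0"
  then obtain \<sigma> where "\<sigma> \<in> perms r" and "f (permword (inv \<sigma>) u) \<noteq> 0"
    unfolding tact_def by (metis (no_types, lifting) mult_zero_right sum.neutral)
  with assms show "u \<in> words n r"
    by (auto simp: Tnr_def permword_in_words_iff perms_inv)
qed

lemma gprod_in_grp_alg:
  assumes "b \<in> grp_alg r"
  shows "gprod r a b \<in> grp_alg r"
  unfolding grp_alg_def mem_Collect_eq
proof (intro allI impI)
  fix \<pi>
  assume "gprod r a b \<pi> \<noteq> 0"
  then obtain \<sigma> where \<sigma>: "\<sigma> \<in> perms r" and "b (inv \<sigma> \<circ> \<pi>) \<noteq> 0"
    unfolding gprod_def by (metis (no_types, lifting) mult_zero_right sum.neutral)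
  with assms have "\<sigma> \<circ> (inv \<sigma> \<circ> \<pi>) \<in> perms r"
    by (auto simp: grp_alg_def perms_compose)
  moreover have "\<sigma> \<circ> (inv \<sigma> \<circ> \<pi>) = \<pi>"
    using \<sigma> by (simp add: perms_def o_assoc permutes_inv_o)
  ultimately show "\<pi> \<in> perms r" by simp
qed

lemma permword_inv_permword_inv:
  assumes "\<sigma> \<in> perms r" "\<tau> \<in> perms r" "length u = r"
  shows "permword (inv \<sigma>) (permword (inv \<tau>) u) = permword (inv (\<sigma> \<circ> \<tau>)) u"
proof -
  have "inv \<sigma> permutes {..<length u}"
    using assms by (simp add: perms_def permutes_inv)
  then have "permword (inv \<sigma>) (permword (inv \<tau>) u) = permword (inv \<tau> \<circ> inv \<sigma>) u"
    by (simp add: permword_eq_permute_list permute_list_compose)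
  also have "inv \<tau> \<circ> inv \<sigma> = inv (\<sigma> \<circ> \<tau>)"
    using assms by (simp add: perms_def o_inv_distrib permutes_bij)
  finally show ?thesis .
qed

lemma tact_tact:
  assumes f: "f \<in> Tnr n r"
  shows "tact r (tact r f a) b = tact r f (gprod r a b)"
proof
  fix u
  show "tact r (tact r f a) b u = tact r f (gprod r a b) u"
  proof (cases "length u = r")
    case False
    then have "f (permword \<sigma> v) = 0" if "length v = length u" for \<sigma> v
      using f that by (auto simp: Tnr_def words_def permword_def)
    then show ?thesis by (simp add: tact_def)
  next
    case True
    have "tact r (tact r f a) b u
        = (\<Sum>\<tau>\<in>perms r. \<Sum>\<sigma>\<in>perms r. b \<tau> * a \<sigma> * f (permword (inv (\<sigma> \<circ> \<tau>)) u))"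
      using True by (simp add: tact_def sum_distrib_left mult.assoc permword_inv_permword_inv)
    also have "\<dots> = (\<Sum>\<sigma>\<in>perms r. \<Sum>\<tau>\<in>perms r. a \<sigma> * b \<tau> * f (permword (inv (\<sigma> \<circ> \<tau>)) u))"
      by (subst sum.swap) (simp add: mult.commute mult.left_commute)
    also have "\<dots> = (\<Sum>\<sigma>\<in>perms r. \<Sum>\<pi>\<in>perms r. a \<sigma> * b (inv \<sigma> \<circ> \<pi>) * f (permword (inv \<pi>) u))"
    proof (rule sum.cong[OF refl])
      fix \<sigma>
      assume \<sigma>: "\<sigma> \<in> perms r"
      then have "\<sigma> permutes {..<r}"
        by (simp add: perms_def)
      then show "(\<Sum>\<tau>\<in>perms r. a \<sigma> * b \<tau> * f (permword (inv (\<sigma> \<circ> \<tau>)) u))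
          = (\<Sum>\<pi>\<in>perms r. a \<sigma> * b (inv \<sigma> \<circ> \<pi>) * f (permword (inv \<pi>) u))"
        by (simp add: sum_perms_compose_left[OF \<sigma>,
              of "\<lambda>\<pi>. a \<sigma> * b (inv \<sigma> \<circ> \<pi>) * f (permword (inv \<pi>) u)"]
              o_assoc permutes_inv_o)
    qed
    also have "\<dots> = tact r f (gprod r a b) u"
      unfolding tact_def gprod_def by (subst sum.swap) (simp add: sum_distrib_right)
    finally show ?thesis .
  qed
qed

lemma lie_idempotent_projects:
  "lie_idempotent n r e \<Longrightarrow> f \<in> Tnr n r \<Longrightarrow> tact r f e \<in> Lnr n r"
  by (auto simp: lie_idempotent_def)

lemma lie_idempotent_fixes:
  assumes e: "lie_idempotent n r e" and x: "x \<in> Lnr n r"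
  shows "tact r x e = x"
proof -
  from assms obtain f where f: "f \<in> Tnr n r" "x = tact r f e"
    by (auto simp: lie_idempotent_def)
  then have "tact r x e = tact r f (gprod r e e)"
    by (simp add: tact_tact)
  with e f show ?thesis
    by (simp add: lie_idempotent_def)
qed

lemma tact_corner_on_Lnr:
  assumes e: "lie_idempotent n r e" and x: "x \<in> Lnr n r"
  shows "tact r x (gprod r (gprod r e a) e) = tact r (tact r x a) e"
proof -
  have "x \<in> Tnr n r"
    using x by (simp add: Lnr_def)
  then have "tact r x (gprod r (gprod r e a) e) = tact r (tact r (tact r x e) a) e"
    by (simp add: tact_tact tact_in_Tnr)
  with lie_idempotent_fixes[OF e x] show ?thesis by simp
qed

lemma imgSym_corner_subset:
  assumes e: "lie_idempotent n r e" and e': "lie_idempotent n r e'"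
  shows "imgSym r (Lnr n r) (corner r e) \<subseteq> imgSym r (Lnr n r) (corner r e')"
proof
  fix \<phi>
  assume "\<phi> \<in> imgSym r (Lnr n r) (corner r e)"
  then obtain a where a: "a \<in> grp_alg r"
    and \<phi>: "\<phi> = rest (Lnr n r) (\<lambda>x. tact r x (gprod r (gprod r e a) e))"
    by (auto simp: imgSym_def corner_def)
  define b where "b = gprod r a e"
  have "tact r x (gprod r (gprod r e' b) e') = tact r x (gprod r (gprod r e a) e)"
    if x: "x \<in> Lnr n r" for x
  proof -
    have xT: "x \<in> Tnr n r"
      using x by (simp add: Lnr_def)
    have "tact r x (gprod r (gprod r e' b) e') = tact r (tact r (tact r x a) e) e'"
      using tact_corner_on_Lnr[OF e' x] xT by (simp add: b_def tact_tact)
    also have "\<dots> = tact r (tact r x a) e"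
      using lie_idempotent_fixes[OF e' lie_idempotent_projects[OF e tact_in_Tnr[OF xT]]] .
    finally show ?thesis
      using tact_corner_on_Lnr[OF e x] by simp
  qed
  then have "\<phi> = rest (Lnr n r) (\<lambda>x. tact r x (gprod r (gprod r e' b) e'))"
    by (simp add: \<phi> rest_def fun_eq_iff)
  moreover have "b \<in> grp_alg r"
    using e by (simp add: b_def lie_idempotent_def gprod_in_grp_alg)
  ultimately show "\<phi> \<in> imgSym r (Lnr n r) (corner r e')"
    unfolding imgSym_def corner_def by blast
qed

theorem mainTheorem9:
  fixes n r :: nat and e e' :: "(nat \<Rightarrow> nat) \<Rightarrow> 'k::field"
  assumes "infinite (UNIV :: 'k set) \<or> r < card (UNIV :: 'k set)"
    and "of_nat r \<noteq> (0::'k)"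
    and "\<exists>\<zeta>::'k. \<zeta> ^ r = 1 \<and> (\<forall>m. 0 < m \<and> m < r \<longrightarrow> \<zeta> ^ m \<noteq> 1)"
    and "lie_idempotent n r e"
    and "lie_idempotent n r e'"
  shows "SW_Lie n r e \<longleftrightarrow> SW_Lie n r e'"
proof -
  have "imgSym r (Lnr n r) (corner r e) = imgSym r (Lnr n r) (corner r e')"
    using imgSym_corner_subset[OF assms(4,5)] imgSym_corner_subset[OF assms(5,4)] by blast
  then show ?thesis
    by (simp add: SW_Lie_def)
qed

end
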